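(* Let $1\le s\le n$. Let $\mathcal{N}(n,s)$ be the set of two-colour necklaces of length $n$ with exactly $s$ beads of colour $0$ and $n-s$ beads of colour $1$, and let $\mathcal{E}(n,s)$ be the set of canonical representative increment arrays of size $s$ for $n$ agents. The map sending a necklace to $\Phi(a)$, where $a=a_1\cdots a_n$ is its lexicographically smallest representative string, is a bijection $\mathcal{N}(n,s)\to\mathcal{E}(n,s)$. Here, for a binary string $a$ with $a_1=0$ containing exactly $s$ zeros, written uniquely as $a=0\,1^{t_0}\,0\,1^{t_1}\cdots 0\,1^{t_{s-1}}$ with $t_i\ge 0$, the run-length encoding is $\Phi(a)=\langle t_0,t_1,\ldots,t_{s-1}\rangle$ (so $t_i$ is the number of consecutive $1$s following the $(i+1)$-th $0$, the last count including the trailing $1$s at the end of the string).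
   Context: A two-colour necklace of length $n$ is an equivalence class of binary strings of length $n$ under cyclic rotation; its canonical (lexicographically smallest) representative is the least string in the class under lexicographic order with $0<1$. An increment array (IA) of size $s$ for $n$ agents is a tuple $\underline{t}=\langle t_0,\ldots,t_{s-1}\rangle$ of non-negative integers with $\sum t_i=n-s$. Two IAs of the same size are equivalent if one is a circular shift of the other, i.e.\ $\langle u_0,\ldots,u_{s-1}\rangle=\langle t_k,\ldots,t_{s-1},t_0,\ldots,t_{k-1}\rangle$ for some $0\le k\le s-1$; the canonical representative of an equivalence class is its lexicographically smallest member, and $\mathcal{E}(n,s)$ is the set of these canonical representatives. *)

theory Defs
  imports Main "HOL-Library.List_Lexorder"
begin

text \<open>Lists are ordered lexicographically (List_Lexorder); binary strings are
nat lists over the alphabet {0,1} with 0 < 1.\<close>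

definition rotations :: "'a list \<Rightarrow> 'a list set" where
  "rotations xs = {rotate k xs | k. True}"

definition necklaces :: "nat \<Rightarrow> nat \<Rightarrow> nat list set set" where
  "necklaces n s = {rotations a | a. length a = n \<and> set a \<subseteq> {0, 1} \<and> count_list a 0 = s}"

definition canon_rep :: "nat list set \<Rightarrow> nat list" where
  "canon_rep N = Min N"

function Phi :: "nat list \<Rightarrow> nat list" where
  "Phi [] = []"
| "Phi (x # rest) = length (takeWhile (\<lambda>b. b = 1) rest) # Phi (dropWhile (\<lambda>b. b = 1) rest)"
  by pat_completeness auto
termination
  by (relation "measure length") (auto simp: le_imp_less_Suc length_dropWhile_le)

definition canonical_IAs :: "nat \<Rightarrow> nat \<Rightarrow> nat list set" where
  "canonical_IAs n s = {t. length t = s \<and> sum_list t = n - s \<and> t = Min (rotations t)}"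

end

theory Submission
  imports Defs
begin

(*
  On binary words starting with 0, Phi is inverted by word_of_runs, which sends
  t = <t_0, ..., t_(s-1)> to 0 1^t_0 0 1^t_1 ... 0 1^t_(s-1). Cutting word_of_runs t just
  before a 0 is the same as cutting t between two entries, so the rotations of
  word_of_runs t that start with 0 are exactly the words word_of_runs q for the rotations q
  of t. Moreover word_of_runs is strictly monotone for the lexicographic order: where two
  encodings first differ, one has a longer run of 1s while the other already has a 0 (or
  has ended). The least rotation of a binary word containing a 0 starts with 0, hence the
  least rotation of word_of_runs t is word_of_runs of the least rotation of t. Therefore
  Phi (canon_rep N) is the least rotation of the run-length array of any representative
  of N, and t \<mapsto> rotations (word_of_runs t) is the inverse map.
*)

definition word_of_runs :: "nat list \<Rightarrow> nat list" where
  "word_of_runs t = concat (map (\<lambda>k. 0 # replicate k 1) t)"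

lemma word_of_runs_Nil [simp]: "word_of_runs [] = []"
  by (simp add: word_of_runs_def)

lemma word_of_runs_Cons [simp]: "word_of_runs (k # t) = 0 # replicate k 1 @ word_of_runs t"
  by (simp add: word_of_runs_def)

lemma word_of_runs_append [simp]: "word_of_runs (t @ u) = word_of_runs t @ word_of_runs u"
  by (simp add: word_of_runs_def)

lemma length_word_of_runs: "length (word_of_runs t) = length t + sum_list t"
  by (induction t) simp_all

lemma count_list_word_of_runs_0: "count_list (word_of_runs t) 0 = length t"
  by (induction t) (simp_all add: count_list_0_iff)

lemma set_word_of_runs_subset: "set (word_of_runs t) \<subseteq> {0, 1}"
  by (induction t) auto

lemma Phi_word_of_runs [simp]: "Phi (word_of_runs t) = t"
proof (induction t)
  case (Cons k t)
  have "takeWhile (\<lambda>b. b = 1) (word_of_runs t) = []"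
    and "dropWhile (\<lambda>b. b = 1) (word_of_runs t) = word_of_runs t"
    by (cases t; simp)+
  then have "takeWhile (\<lambda>b. b = 1) (replicate k 1 @ word_of_runs t) = replicate k 1"
    and "dropWhile (\<lambda>b. b = 1) (replicate k 1 @ word_of_runs t) = word_of_runs t"
    by (induction k) simp_all
  with Cons.IH show ?case
    by simp
qed simp

lemma word_of_runs_Phi:
  assumes "set a \<subseteq> {0, 1}" and "a = [] \<or> hd a = 0"
  shows "word_of_runs (Phi a) = a"
  using assms
proof (induction a rule: Phi.induct)
  case (2 x rest)
  define ones where "ones = takeWhile (\<lambda>b. b = 1) rest"
  define rest' where "rest' = dropWhile (\<lambda>b. b = 1) rest"
  have rest: "rest = ones @ rest'"
    by (simp add: ones_def rest'_def)
  have ones: "replicate (length ones) 1 = ones"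
    unfolding ones_def by (metis (mono_tags) replicate_length_same set_takeWhileD)
  have set_rest': "set rest' \<subseteq> {0, 1}"
    using "2.prems"(1) rest by auto
  have "rest' = [] \<or> hd rest' = 0"
  proof (cases "rest' = []")
    case False
    then have "hd rest' \<noteq> 1"
      using hd_dropWhile[of "\<lambda>b. b = 1" rest] by (simp add: rest'_def)
    moreover have "hd rest' \<in> {0, 1}"
      using set_rest' False hd_in_set by blast
    ultimately show ?thesis by auto
  qed simp
  then have "word_of_runs (Phi rest') = rest'"
    using "2.IH"[folded rest'_def] set_rest' by blast
  moreover have "Phi (x # rest) = length ones # Phi rest'"
    by (simp add: ones_def rest'_def)
  ultimately show ?case
    using "2.prems"(2) ones by (simp add: rest)
qed simp

lemma append_less_append_iff: "xs @ ys < xs @ zs \<longleftrightarrow> ys < (zs :: 'a :: order list)"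
  by (induction xs) simp_all

lemma word_of_runs_less_Cons_1: "word_of_runs t < 1 # xs"
  by (cases t) simp_all

lemma strict_mono_word_of_runs: "strict_mono word_of_runs"
proof (rule strict_monoI)
  show "word_of_runs t < word_of_runs u" if "t < u" for t u
    using that
  proof (induction t arbitrary: u)
    case Nil
    then show ?case by (cases u) simp_all
  next
    case (Cons a t)
    then obtain b u' where u: "u = b # u'" and "a < b \<or> a = b \<and> t < u'"
      by (cases u) auto
    then consider "a < b" | "a = b" "t < u'" by blast
    then show ?case
    proof cases
      case 1
      then have "replicate b 1 = replicate a 1 @ 1 # replicate (b - Suc a) (1::nat)"
        by (metis Suc_diff_Suc replicate_Suc replicate_add add_diff_inverse_nat less_imp_not_less)
      with u word_of_runs_less_Cons_1 show ?thesis
        by (simp add: append_less_append_iff)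
    next
      case 2
      with u Cons.IH show ?thesis
        by (simp add: append_less_append_iff)
    qed
  qed
qed

lemma rotations_conv_append: "r \<in> rotations xs \<longleftrightarrow> (\<exists>u v. xs = u @ v \<and> r = v @ u)"
proof
  assume "r \<in> rotations xs"
  then obtain k where "r = rotate k xs"
    by (auto simp: rotations_def)
  then have "xs = take (k mod length xs) xs @ drop (k mod length xs) xs"
    and "r = drop (k mod length xs) xs @ take (k mod length xs) xs"
    by (simp_all add: rotate_drop_take)
  then show "\<exists>u v. xs = u @ v \<and> r = v @ u"
    by blast
next
  assume "\<exists>u v. xs = u @ v \<and> r = v @ u"
  then obtain u v where "xs = u @ v" "r = v @ u"
    by blast
  then have "r = rotate (length u) xs"
    by (simp add: rotate_append)
  then show "r \<in> rotations xs"
    by (auto simp: rotations_def)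
qed

lemma self_in_rotations: "xs \<in> rotations xs"
  unfolding rotations_conv_append by force

lemma rotations_eq:
  assumes "r \<in> rotations xs"
  shows "rotations r = rotations xs"
proof -
  obtain k where k: "r = rotate k xs"
    using assms by (auto simp: rotations_def)
  obtain u v where "xs = u @ v" "r = v @ u"
    using assms by (auto simp: rotations_conv_append)
  then have i: "xs = rotate (length v) r"
    by (simp add: rotate_append)
  have "rotate j r \<in> rotations xs" for j
    unfolding rotations_def k rotate_rotate by blast
  moreover have "rotate j xs \<in> rotations r" for j
    unfolding rotations_def by (subst i) (auto simp: rotate_rotate)
  ultimately show ?thesis
    unfolding rotations_def by blast
qed

lemma finite_rotations: "finite (rotations xs)"
proof (rule finite_subset)
  show "rotations xs \<subseteq> {ys. set ys \<subseteq> set xs \<and> length ys = length xs}"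
    by (auto simp: rotations_def)
  show "finite {ys. set ys \<subseteq> set xs \<and> length ys = length xs}"
    by (rule finite_lists_length_eq) simp
qed

lemma Min_rotations_in_rotations: "Min (rotations xs) \<in> rotations xs"
  using Min_in[OF finite_rotations] self_in_rotations by blast

lemma rotations_Min_rotations: "rotations (Min (rotations xs)) = rotations xs"
  by (rule rotations_eq[OF Min_rotations_in_rotations])

lemma hd_Min_rotations:
  fixes xs :: "'a :: linorder list"
  assumes "xs \<noteq> []"
  shows "hd (Min (rotations xs)) = Min (set xs)"
proof -
  let ?m = "Min (rotations xs)"
  obtain u v where m: "xs = u @ v" "?m = v @ u"
    using Min_rotations_in_rotations rotations_conv_append by blast
  then have "hd ?m \<in> set xs" "?m \<noteq> []"
    using assms by (auto simp: hd_append)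
  then have "Min (set xs) \<le> hd ?m"
    by simp
  obtain u' v' where xs: "xs = u' @ Min (set xs) # v'"
    using assms by (metis Min_in finite_set set_empty split_list)
  then have "Min (set xs) # v' @ u' \<in> rotations xs"
    unfolding rotations_conv_append by (intro exI[of _ u'] exI[of _ "Min (set xs) # v'"]) simp
  then have "?m \<le> Min (set xs) # v' @ u'"
    by (simp add: finite_rotations)
  with \<open>?m \<noteq> []\<close> have "hd ?m \<le> Min (set xs)"
    by (cases ?m) auto
  with \<open>Min (set xs) \<le> hd ?m\<close> show ?thesis
    by simp
qed

lemma append_eq_replicate_1_append:
  assumes "u @ v = replicate k 1 @ w" and "v = [] \<or> hd v = (0::nat)"
  shows "\<exists>w'. u = replicate k 1 @ w' \<and> w' @ v = w"
proof -
  obtain us where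
    "u = replicate k 1 @ us \<and> us @ v = w \<or> u @ us = replicate k 1 \<and> v = us @ w"
    using assms(1) append_eq_append_conv2[of u v "replicate k 1" w] by blast
  moreover have "us = []" if us: "u @ us = replicate k 1" "v = us @ w"
  proof (rule ccontr)
    assume "us \<noteq> []"
    then have "hd us \<in> set (u @ us)"
      by simp
    then have "hd v = 1"
      using us \<open>us \<noteq> []\<close> by (simp add: hd_append)
    with assms(2) us(2) \<open>us \<noteq> []\<close> show False
      by simp
  qed
  ultimately show ?thesis
    by auto
qed

lemma word_of_runs_split:
  assumes "word_of_runs t = u @ v" and "v = [] \<or> hd v = 0"
  shows "\<exists>t1 t2. t = t1 @ t2 \<and> u = word_of_runs t1 \<and> v = word_of_runs t2"
  using assms(1)
proof (induction t arbitrary: u)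
  case Nil
  then show ?case by simp
next
  case (Cons k t)
  show ?case
  proof (cases "u = []")
    case True
    with Cons.prems show ?thesis
      by (intro exI[of _ "[]"] exI[of _ "k # t"]) simp
  next
    case False
    then obtain b u' where u: "u = b # u'"
      by (meson neq_Nil_conv)
    with Cons.prems have "b = 0" and "u' @ v = replicate k 1 @ word_of_runs t"
      by simp_all
    then obtain w where w: "u' = replicate k 1 @ w" "w @ v = word_of_runs t"
      using append_eq_replicate_1_append assms(2) by blast
    then obtain t1 t2 where "t = t1 @ t2" "w = word_of_runs t1" "v = word_of_runs t2"
      using Cons.IH[OF w(2)[symmetric]] by blast
    with u w \<open>b = 0\<close> show ?thesis
      by (intro exI[of _ "k # t1"] exI[of _ t2]) simp
  qed
qed

lemma word_of_runs_in_rotations: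
  assumes "r \<in> rotations t"
  shows "word_of_runs r \<in> rotations (word_of_runs t)"
proof -
  obtain u v where "t = u @ v" "r = v @ u"
    using assms by (auto simp: rotations_conv_append)
  then show ?thesis
    unfolding rotations_conv_append by (intro exI[of _ "word_of_runs u"] exI[of _ "word_of_runs v"]) simp
qed

lemma rotation_word_of_runs_hd_0:
  assumes "r \<in> rotations (word_of_runs t)" and "r \<noteq> []" and "hd r = 0"
  shows "\<exists>q \<in> rotations t. r = word_of_runs q"
proof -
  obtain u v where uv: "word_of_runs t = u @ v" "r = v @ u"
    using assms(1) by (auto simp: rotations_conv_append)
  with assms(2,3) have "v = [] \<or> hd v = 0"
    by (cases v) auto
  with uv obtain t1 t2 where "t = t1 @ t2" "u = word_of_runs t1" "v = word_of_runs t2"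
    using word_of_runs_split by blast
  with uv have "t2 @ t1 \<in> rotations t" and "r = word_of_runs (t2 @ t1)"
    unfolding rotations_conv_append by auto
  then show ?thesis
    by blast
qed

lemma Min_rotations_word_of_runs:
  assumes "t \<noteq> []"
  shows "Min (rotations (word_of_runs t)) = word_of_runs (Min (rotations t))"
proof -
  let ?m = "Min (rotations (word_of_runs t))"
  have m: "?m \<in> rotations (word_of_runs t)"
    by (rule Min_rotations_in_rotations)
  have "word_of_runs t \<noteq> []" "Min (set (word_of_runs t)) = 0"
    using assms by (cases t; simp add: Min_eqI)+
  then have "?m \<noteq> []" and "hd ?m = 0"
    using m hd_Min_rotations[of "word_of_runs t"] by (auto simp: rotations_conv_append)
  with m obtain q where q: "q \<in> rotations t" "?m = word_of_runs q"
    using rotation_word_of_runs_hd_0 by blast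
  have "q = Min (rotations t)"
  proof (rule sym, rule Min_eqI[OF finite_rotations _ q(1)])
    fix r assume "r \<in> rotations t"
    then have "?m \<le> word_of_runs r"
      by (simp add: finite_rotations word_of_runs_in_rotations)
    with q(2) show "q \<le> r"
      using strict_mono_word_of_runs by (simp add: strict_mono_less_eq)
  qed
  with q(2) show ?thesis
    by simp
qed

lemma Min_rotations_in_canonical_IAs:
  assumes "length t = s" and "sum_list t = n - s"
  shows "Min (rotations t) \<in> canonical_IAs n s"
proof -
  obtain u v where "t = u @ v" "Min (rotations t) = v @ u"
    using Min_rotations_in_rotations rotations_conv_append by blast
  with assms show ?thesis
    unfolding canonical_IAs_def using rotations_Min_rotations[of t] by simp
qed

lemma rotations_word_of_runs_Min_rotations:
  "rotations (word_of_runs (Min (rotations t))) = rotations (word_of_runs t)"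
  by (intro rotations_eq word_of_runs_in_rotations Min_rotations_in_rotations)

lemma Phi_canon_rep_rotations_word_of_runs:
  assumes "t \<noteq> []"
  shows "Phi (canon_rep (rotations (word_of_runs t))) = Min (rotations t)"
  using assms by (simp add: canon_rep_def Min_rotations_word_of_runs)

lemma necklaces_eq_image_word_of_runs:
  assumes "1 \<le> s" and "s \<le> n"
  shows "necklaces n s = (\<lambda>t. rotations (word_of_runs t)) ` {t. length t = s \<and> sum_list t = n - s}"
proof (intro equalityI subsetI)
  fix N assume "N \<in> necklaces n s"
  then obtain a where a: "N = rotations a" "length a = n" "set a \<subseteq> {0, 1}" "count_list a 0 = s"
    unfolding necklaces_def by blast
  have "0 \<in> set a"
    using a(4) assms(1) count_list_0_iff[of a 0] by auto
  then obtain u v where uv: "a = u @ 0 # v"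
    by (meson split_list)
  define r where "r = (0 # v) @ u"
  have "r \<in> rotations a"
    unfolding rotations_conv_append r_def uv by blast
  with a have N: "N = rotations r"
    by (simp add: rotations_eq)
  have r: "length r = n" "set r \<subseteq> {0, 1}" "count_list r 0 = s"
    using a uv by (auto simp: r_def)
  then have r_runs: "word_of_runs (Phi r) = r"
    by (intro word_of_runs_Phi) (simp_all add: r_def)
  with r have "length (Phi r) = s" and "sum_list (Phi r) = n - s"
    using count_list_word_of_runs_0[of "Phi r"] length_word_of_runs[of "Phi r"] by simp_all
  with N r_runs show "N \<in> (\<lambda>t. rotations (word_of_runs t)) ` {t. length t = s \<and> sum_list t = n - s}"
    by force
next
  fix N assume "N \<in> (\<lambda>t. rotations (word_of_runs t)) ` {t. length t = s \<and> sum_list t = n - s}"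
  then obtain t where "length t = s" "sum_list t = n - s" "N = rotations (word_of_runs t)"
    by blast
  with assms(2) show "N \<in> necklaces n s"
    unfolding necklaces_def
    using length_word_of_runs count_list_word_of_runs_0 set_word_of_runs_subset by fastforce
qed

theorem proposition11:
  fixes n s :: nat
  assumes "1 \<le> s" and "s \<le> n"
  shows "bij_betw (\<lambda>N. Phi (canon_rep N)) (necklaces n s) (canonical_IAs n s)"
proof (rule bij_betw_byWitness[where f' = "\<lambda>t. rotations (word_of_runs t)"])
  let ?T = "{t. length t = s \<and> sum_list t = n - s}"
  have necklaces: "necklaces n s = (\<lambda>t. rotations (word_of_runs t)) ` ?T"
    using assms by (rule necklaces_eq_image_word_of_runs)
  have Phi_canon_rep: "Phi (canon_rep (rotations (word_of_runs t))) = Min (rotations t)" if "t \<in> ?T" for t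
    using that assms(1) by (intro Phi_canon_rep_rotations_word_of_runs) auto
  show "\<forall>N \<in> necklaces n s. rotations (word_of_runs (Phi (canon_rep N))) = N"
    using Phi_canon_rep
    by (auto simp: necklaces rotations_word_of_runs_Min_rotations)
  show "\<forall>t \<in> canonical_IAs n s. Phi (canon_rep (rotations (word_of_runs t))) = t"
    using Phi_canon_rep by (auto simp: canonical_IAs_def)
  show "(\<lambda>N. Phi (canon_rep N)) ` necklaces n s \<subseteq> canonical_IAs n s"
    using Phi_canon_rep by (auto simp: necklaces Min_rotations_in_canonical_IAs)
  show "(\<lambda>t. rotations (word_of_runs t)) ` canonical_IAs n s \<subseteq> necklaces n s"
    unfolding necklaces canonical_IAs_def by auto
qed

end
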